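(* Let $\Lambda$ be a lattice and $\Lambda'\subseteq\Lambda$ a sublattice of finite index. Then $\Lambda'$ is characteristic if and only if the index of $\Lambda'$ in $\Lambda$ is coprime to $p$.
   Context: $K=\mathrm{GF}(p^r)$, $\bar K$ an algebraic closure; a lattice is a free abelian group of finite rank. A sublattice $\Lambda'\subseteq\Lambda$ is characteristic if $\Lambda'=\bigcap_{i=1}^m\ker(\theta_i)$ for some finitely many homomorphisms $\theta_1,\ldots,\theta_m:\Lambda\to\bar K^\times$. *)

theory Defs
  imports "HOL-Algebra.Algebraic_Closure_Type"
begin

text \<open>A lattice of rank n is modelled (up to isomorphism) as Z^n, realised as
  integer sequences supported on the indices 0..n-1.\<close>
definition lat :: "nat \<Rightarrow> (nat \<Rightarrow> int) set" where
  "lat n = {x. \<forall>i\<ge>n. x i = 0}"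

definition vadd :: "(nat \<Rightarrow> int) \<Rightarrow> (nat \<Rightarrow> int) \<Rightarrow> (nat \<Rightarrow> int)" where
  "vadd x y = (\<lambda>i. x i + y i)"

definition sublattice :: "nat \<Rightarrow> (nat \<Rightarrow> int) set \<Rightarrow> bool" where
  "sublattice n L \<longleftrightarrow> L \<subseteq> lat n \<and> (\<lambda>_. 0) \<in> L \<and> (\<forall>x\<in>L. \<forall>y\<in>L. vadd x y \<in> L) \<and> (\<forall>x\<in>L. (\<lambda>i. - x i) \<in> L)"

definition cosets :: "nat \<Rightarrow> (nat \<Rightarrow> int) set \<Rightarrow> (nat \<Rightarrow> int) set set" where
  "cosets n L = (\<lambda>x. vadd x ` L) ` lat n"

definition lat_index :: "nat \<Rightarrow> (nat \<Rightarrow> int) set \<Rightarrow> nat" where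
  "lat_index n L = card (cosets n L)"

definition lat_hom :: "nat \<Rightarrow> ((nat \<Rightarrow> int) \<Rightarrow> 'k::field) \<Rightarrow> bool" where
  "lat_hom n \<theta> \<longleftrightarrow> (\<forall>x\<in>lat n. \<theta> x \<noteq> 0) \<and> (\<forall>x\<in>lat n. \<forall>y\<in>lat n. \<theta> (vadd x y) = \<theta> x * \<theta> y)"

definition characteristic :: "'k::field itself \<Rightarrow> nat \<Rightarrow> (nat \<Rightarrow> int) set \<Rightarrow> bool" where
  "characteristic _ n L \<longleftrightarrow>
     (\<exists>m (\<theta>s :: nat \<Rightarrow> (nat \<Rightarrow> int) \<Rightarrow> 'k).
        (\<forall>i<m. lat_hom n (\<theta>s i)) \<and> L = {x\<in>lat n. \<forall>i<m. \<theta>s i x = 1})"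

end

theory Submission
  imports Defs "HOL-Algebra.Sylow" "HOL-Library.Function_Algebras" "HOL-Number_Theory.Residues"
begin

text \<open>Let \<open>K\<close> be the algebraic closure, of characteristic \<open>p\<close>, and \<open>N\<close> the index.
  If \<open>p\<close> divides \<open>N\<close>, Cauchy's theorem in \<open>\<Lambda>/\<Lambda>'\<close> gives \<open>x \<notin> \<Lambda>'\<close> with \<open>p x \<in> \<Lambda>'\<close>; every
  character \<open>\<theta>\<close> trivial on \<open>\<Lambda>'\<close> then satisfies \<open>\<theta>(x)\<^sup>p = 1\<close>, hence \<open>\<theta>(x) = 1\<close> because there are no
  nontrivial \<open>p\<close>-th roots of unity in characteristic \<open>p\<close>. So \<open>x\<close> lies in every intersection of
  such kernels, and \<open>\<Lambda>'\<close> is not characteristic.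

  Conversely, if \<open>N\<close> is prime to \<open>p\<close>, the order \<open>k > 1\<close> of any \<open>x \<notin> \<Lambda>'\<close> modulo \<open>\<Lambda>'\<close> divides \<open>N\<close>,
  so \<open>K\<close> has a \<open>k\<close>-th root of unity \<open>c \<noteq> 1\<close>. The character of \<open>\<Lambda>' + \<int>x\<close> that is trivial on
  \<open>\<Lambda>'\<close> and sends \<open>x\<close> to \<open>c\<close> extends to \<open>\<Lambda>\<close>, one basis vector at a time, because \<open>K\<^sup>*\<close> is
  divisible. One such character for each of the finitely many nontrivial cosets cuts out \<open>\<Lambda>'\<close>.\<close>

section \<open>Additive subgroups and integer multiples\<close>

lemma of_int_fun_apply [simp]: "(of_int t :: 'a \<Rightarrow> 'b::ring_1) x = of_int t"
  by (cases t rule: int_cases) (simp_all add: of_nat_fun)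

definition add_subgroup :: "'a::ab_group_add set \<Rightarrow> bool" where
  "add_subgroup M \<longleftrightarrow> 0 \<in> M \<and> (\<forall>x\<in>M. \<forall>y\<in>M. x + y \<in> M) \<and> (\<forall>x\<in>M. - x \<in> M)"

lemma add_subgroup_diff:
  "add_subgroup M \<Longrightarrow> x \<in> M \<Longrightarrow> y \<in> M \<Longrightarrow> x - y \<in> M"
  unfolding add_subgroup_def by (metis diff_conv_add_uminus)

lemma add_subgroup_of_int_mult:
  fixes x :: "'a::comm_ring_1"
  assumes M: "add_subgroup M" and x: "x \<in> M"
  shows "of_int t * x \<in> M"
proof (induction t rule: int_induct[where k = 0])
  case base
  then show ?case using M by (simp add: add_subgroup_def)
next
  case (step1 t)
  then show ?case using M x by (simp add: add_subgroup_def distrib_right)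
next
  case (step2 t)
  then show ?case using add_subgroup_diff[OF M _ x] by (simp add: left_diff_distrib)
qed

lemma add_subgroup_group_closure_eq:
  assumes "add_subgroup M"
  shows "group_closure M = M"
proof
  show "group_closure M \<subseteq> M"
  proof
    fix s assume "s \<in> group_closure M"
    then show "s \<in> M"
      by induction (use assms add_subgroup_diff in \<open>auto simp: add_subgroup_def\<close>)
  qed
qed (auto intro: group_closure.base)

lemma ex_order_mod_add_subgroup:
  fixes v :: "'a::comm_ring_1"
  assumes M: "add_subgroup M"
  shows "\<exists>k\<ge>0. \<forall>t. of_int t * v \<in> M \<longleftrightarrow> k dvd t"
proof -
  define I where "I = {t. of_int t * v \<in> M}"
  have "add_subgroup I"
    using M unfolding add_subgroup_def I_def by (simp add: distrib_right)
  then have "I = range (times (Gcd I))"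
    using group_closure_eq[of I] add_subgroup_group_closure_eq by metis
  then have "of_int t * v \<in> M \<longleftrightarrow> Gcd I dvd t" for t
    unfolding I_def by (auto simp: dvd_def)
  then show ?thesis
    by (intro exI[of _ "Gcd I"]) simp
qed

lemma image_plus_add_subgroup:
  assumes "add_subgroup M" "x \<in> M"
  shows "(+) x ` M = M"
proof
  show "(+) x ` M \<subseteq> M"
    using assms by (auto simp: add_subgroup_def)
  show "M \<subseteq> (+) x ` M"
  proof
    fix y assume "y \<in> M"
    then have "y - x \<in> M"
      using add_subgroup_diff assms by blast
    then show "y \<in> (+) x ` M"
      by (rule rev_image_eqI) simp
  qed
qed

definition adjoin :: "'a::comm_ring_1 set \<Rightarrow> 'a \<Rightarrow> 'a set" where
  "adjoin M v = {y. \<exists>m\<in>M. \<exists>t. y = m + of_int t * v}"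

lemma add_subgroup_adjoin:
  assumes M: "add_subgroup M"
  shows "add_subgroup (adjoin M v)"
  unfolding add_subgroup_def
proof (intro conjI ballI)
  have "0 = 0 + of_int 0 * v"
    by simp
  then show "0 \<in> adjoin M v"
    using M unfolding adjoin_def add_subgroup_def by blast
next
  fix x y assume "x \<in> adjoin M v" "y \<in> adjoin M v"
  then obtain m1 t1 m2 t2 where "m1 \<in> M" "m2 \<in> M" "x = m1 + of_int t1 * v" "y = m2 + of_int t2 * v"
    unfolding adjoin_def by blast
  moreover from this have "x + y = (m1 + m2) + of_int (t1 + t2) * v"
    by (simp add: algebra_simps)
  ultimately show "x + y \<in> adjoin M v"
    using M unfolding adjoin_def add_subgroup_def by blast
next
  fix x assume "x \<in> adjoin M v"
  then obtain m t where "m \<in> M" "x = m + of_int t * v"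
    unfolding adjoin_def by blast
  moreover from this have "- x = - m + of_int (- t) * v"
    by (simp add: algebra_simps)
  ultimately show "- x \<in> adjoin M v"
    using M unfolding adjoin_def add_subgroup_def by blast
qed

lemma subset_adjoin: "M \<subseteq> adjoin M v"
proof
  fix m assume "m \<in> M"
  moreover have "m = m + of_int 0 * v"
    by simp
  ultimately show "m \<in> adjoin M v"
    unfolding adjoin_def by blast
qed

lemma mem_adjoin_self:
  assumes "add_subgroup M"
  shows "v \<in> adjoin M v"
proof -
  have "v = 0 + of_int 1 * v"
    by simp
  then show ?thesis
    using assms unfolding adjoin_def add_subgroup_def by blast
qed

lemma adjoin_subset:
  assumes "add_subgroup N" "M \<subseteq> N" "v \<in> N"
  shows "adjoin M v \<subseteq> N"
proof
  fix y assume "y \<in> adjoin M v"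
  then obtain m t where "m \<in> M" "y = m + of_int t * v"
    unfolding adjoin_def by blast
  moreover have "of_int t * v \<in> N"
    using add_subgroup_of_int_mult assms(1,3) by blast
  ultimately show "y \<in> N"
    using assms(1,2) unfolding add_subgroup_def by blast
qed

section \<open>Extending characters\<close>

definition character_on :: "'a::ab_group_add set \<Rightarrow> ('a \<Rightarrow> 'k::field) \<Rightarrow> bool" where
  "character_on M \<theta> \<longleftrightarrow> (\<forall>x\<in>M. \<theta> x \<noteq> 0) \<and> (\<forall>x\<in>M. \<forall>y\<in>M. \<theta> (x + y) = \<theta> x * \<theta> y)"

lemma character_on_zero:
  assumes "add_subgroup M" "character_on M \<theta>"
  shows "\<theta> 0 = 1"
proof -
  have "0 \<in> M" using assms(1) by (simp add: add_subgroup_def)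
  then have "\<theta> 0 * \<theta> 0 = \<theta> 0" "\<theta> 0 \<noteq> 0"
    using assms(2) unfolding character_on_def by (metis add_0, blast)
  then show ?thesis
    by (metis mult_cancel_left1)
qed

lemma character_on_of_int_mult:
  fixes x :: "'a::comm_ring_1"
  assumes M: "add_subgroup M" and \<theta>: "character_on M \<theta>" and x: "x \<in> M"
  shows "\<theta> (of_int t * x) = \<theta> x powi t"
proof -
  have "\<theta> x \<noteq> 0"
    using \<theta> x by (simp add: character_on_def)
  show ?thesis
  proof (induction t rule: int_induct[where k = 0])
    case base
    then show ?case using character_on_zero[OF M \<theta>] by simp
  next
    case (step1 t)
    have "\<theta> (of_int (t + 1) * x) = \<theta> (of_int t * x) * \<theta> x"
      using \<theta> add_subgroup_of_int_mult[OF M x] x by (simp add: character_on_def distrib_right)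
    then show ?case
      using step1 \<open>\<theta> x \<noteq> 0\<close> by (simp add: power_int_add_1)
  next
    case (step2 t)
    have "\<theta> (of_int t * x) = \<theta> (of_int (t - 1) * x) * \<theta> x"
      using \<theta> add_subgroup_of_int_mult[OF M x] x unfolding character_on_def
      by (metis diff_add_cancel distrib_right mult_1 of_int_1 of_int_add)
    then show ?case
      using step2 \<open>\<theta> x \<noteq> 0\<close> by (simp add: power_int_diff)
  qed
qed

lemma adjoin_value_well_defined:
  fixes v :: "'a::comm_ring_1"
  assumes M: "add_subgroup M" and \<theta>: "character_on M \<theta>" and c: "c \<noteq> 0"
    and compat: "\<And>t. of_int t * v \<in> M \<Longrightarrow> \<theta> (of_int t * v) = c powi t"
    and m: "m \<in> M" "m' \<in> M" and eq: "m + of_int t * v = m' + of_int t' * v"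
  shows "\<theta> m * c powi t = \<theta> m' * c powi t'"
proof -
  have diff: "of_int (t' - t) * v = m - m'"
    using eq by (simp add: algebra_simps)
  then have in_M: "of_int (t' - t) * v \<in> M"
    using add_subgroup_diff[OF M m] by simp
  have "\<theta> m = \<theta> (m' + of_int (t' - t) * v)"
    using diff by simp
  also have "\<dots> = \<theta> m' * c powi (t' - t)"
    using \<theta> m(2) in_M compat[OF in_M] by (simp add: character_on_def)
  finally show ?thesis
    using c by (simp add: power_int_diff)
qed

lemma character_on_adjoin:
  fixes v :: "'a::comm_ring_1" and \<theta> :: "'a \<Rightarrow> 'k::field"
  assumes M: "add_subgroup M" and \<theta>: "character_on M \<theta>" and c: "c \<noteq> 0"
    and compat: "\<And>t. of_int t * v \<in> M \<Longrightarrow> \<theta> (of_int t * v) = c powi t"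
  shows "\<exists>\<theta>'. character_on (adjoin M v) \<theta>' \<and> (\<forall>m\<in>M. \<theta>' m = \<theta> m) \<and> \<theta>' v = c"
proof -
  define \<theta>' where
    "\<theta>' y = (case SOME (m, t). m \<in> M \<and> y = m + of_int t * v of (m, t) \<Rightarrow> \<theta> m * c powi t)" for y
  have \<theta>'_eq: "\<theta>' (m + of_int t * v) = \<theta> m * c powi t" if "m \<in> M" for m t
  proof -
    let ?P = "\<lambda>(m', t'). m' \<in> M \<and> m + of_int t * v = m' + of_int t' * v"
    obtain m' t' where mt': "(SOME mt. ?P mt) = (m', t')"
      by (cases "SOME mt. ?P mt")
    have "?P (m', t')"
      using someI[of ?P "(m, t)"] that mt' by simp
    then have m': "m' \<in> M" and eq: "m + of_int t * v = m' + of_int t' * v"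
      by simp_all
    have "\<theta>' (m + of_int t * v) = \<theta> m' * c powi t'"
      using mt' by (simp add: \<theta>'_def)
    also have "\<dots> = \<theta> m * c powi t"
      using adjoin_value_well_defined[OF M \<theta> c compat that m' eq] by (rule sym)
    finally show ?thesis .
  qed
  have "character_on (adjoin M v) \<theta>'"
    unfolding character_on_def
  proof (intro conjI ballI)
    fix x assume "x \<in> adjoin M v"
    then obtain m t where "m \<in> M" "x = m + of_int t * v"
      unfolding adjoin_def by blast
    then show "\<theta>' x \<noteq> 0"
      using \<theta>'_eq \<theta> c by (simp add: character_on_def)
  next
    fix x y assume "x \<in> adjoin M v" "y \<in> adjoin M v"
    then obtain m1 t1 m2 t2 where m: "m1 \<in> M" "m2 \<in> M"
      and xy: "x = m1 + of_int t1 * v" "y = m2 + of_int t2 * v"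
      unfolding adjoin_def by blast
    then have "x + y = (m1 + m2) + of_int (t1 + t2) * v"
      by (simp add: algebra_simps)
    moreover have "m1 + m2 \<in> M"
      using M m by (simp add: add_subgroup_def)
    ultimately have "\<theta>' (x + y) = \<theta> (m1 + m2) * c powi (t1 + t2)"
      by (metis \<theta>'_eq)
    also have "\<dots> = (\<theta> m1 * c powi t1) * (\<theta> m2 * c powi t2)"
      using \<theta> m c by (simp add: character_on_def power_int_add mult_ac)
    also have "\<dots> = \<theta>' x * \<theta>' y"
      using \<theta>'_eq m xy by simp
    finally show "\<theta>' (x + y) = \<theta>' x * \<theta>' y" .
  qed
  moreover have "\<theta>' m = \<theta> m" if "m \<in> M" for m
    using \<theta>'_eq[OF that, of 0] by simp
  moreover have "\<theta>' v = c"
    using \<theta>'_eq[of 0 1] M character_on_zero[OF M \<theta>] by (simp add: add_subgroup_def)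
  ultimately show ?thesis
    by blast
qed

text \<open>If \<open>{t. t v \<in> M} = k\<int>\<close>, the value at \<open>v\<close> must be a \<open>k\<close>-th root of \<open>\<theta> (k v)\<close>; this is
  where the divisibility of \<open>K\<^sup>*\<close> enters.\<close>
lemma ex_compatible_value:
  fixes v :: "'a::comm_ring_1" and \<theta> :: "'a \<Rightarrow> 'k::alg_closed_field"
  assumes M: "add_subgroup M" and \<theta>: "character_on M \<theta>"
  shows "\<exists>c. c \<noteq> 0 \<and> (\<forall>t. of_int t * v \<in> M \<longrightarrow> \<theta> (of_int t * v) = c powi t)"
proof -
  obtain k where k: "k \<ge> 0" "\<And>t. of_int t * v \<in> M \<longleftrightarrow> k dvd t"
    using ex_order_mod_add_subgroup[OF M] by blast
  show ?thesis
  proof (cases "k = 0")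
    case True
    then show ?thesis
      using k(2) character_on_zero[OF M \<theta>] by (intro exI[of _ 1]) simp
  next
    case False
    have kv: "of_int k * v \<in> M"
      using k(2) by simp
    obtain c where c: "c ^ nat k = \<theta> (of_int k * v)"
      using nth_root_exists[of "nat k"] False k(1) by fastforce
    have "c \<noteq> 0"
    proof
      assume "c = 0"
      then have "\<theta> (of_int k * v) = 0"
        using c False k(1) by (simp add: power_0_left)
      then show False
        using \<theta> kv by (simp add: character_on_def)
    qed
    moreover have "\<theta> (of_int t * v) = c powi t" if tv: "of_int t * v \<in> M" for t
    proof -
      obtain q where q: "t = k * q"
        using k(2)[of t] tv unfolding dvd_def by blast
      have "of_int t * v = of_int q * (of_int k * v)"
        unfolding q by (simp add: algebra_simps)
      then have "\<theta> (of_int t * v) = \<theta> (of_int q * (of_int k * v))"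
        by simp
      also have "\<dots> = (c ^ nat k) powi q"
        using character_on_of_int_mult[OF M \<theta> kv] c by simp
      also have "\<dots> = c powi t"
        using k(1) by (simp add: q power_int_mult flip: power_int_of_nat)
      finally show ?thesis .
    qed
    ultimately show ?thesis
      by blast
  qed
qed

lemma vadd_eq_plus [simp]: "vadd x y = x + y"
  by (simp add: vadd_def plus_fun_def)

lemma sublattice_iff: "sublattice n L \<longleftrightarrow> L \<subseteq> lat n \<and> add_subgroup L"
  by (simp add: sublattice_def add_subgroup_def zero_fun_def fun_Compl_def)

lemma add_subgroup_lat: "add_subgroup (lat n)"
  by (simp add: add_subgroup_def lat_def)

lemma lat_hom_iff_character_on: "lat_hom n \<theta> \<longleftrightarrow> character_on (lat n) \<theta>"
  by (simp add: lat_hom_def character_on_def)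

text \<open>\<open>free_below j M\<close> is \<open>M + \<int>e\<^sub>0 + \<dots> + \<int>e\<^sub>j\<^sub>-\<^sub>1\<close>: the coordinates below \<open>j\<close> are unconstrained.\<close>
definition free_below :: "nat \<Rightarrow> (nat \<Rightarrow> int) set \<Rightarrow> (nat \<Rightarrow> int) set" where
  "free_below j M = {y. \<exists>m\<in>M. \<forall>i\<ge>j. y i = m i}"

lemma add_subgroup_free_below:
  assumes M: "add_subgroup M"
  shows "add_subgroup (free_below j M)"
  unfolding add_subgroup_def
proof (intro conjI ballI)
  show "0 \<in> free_below j M"
    using M unfolding add_subgroup_def free_below_def by blast
next
  fix x y assume "x \<in> free_below j M" "y \<in> free_below j M"
  then obtain m1 m2 where m: "m1 \<in> M" "m2 \<in> M" "\<forall>i\<ge>j. x i = m1 i" "\<forall>i\<ge>j. y i = m2 i"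
    unfolding free_below_def by blast
  then have "\<forall>i\<ge>j. (x + y) i = (m1 + m2) i"
    by simp
  moreover have "m1 + m2 \<in> M"
    using M m by (simp add: add_subgroup_def)
  ultimately show "x + y \<in> free_below j M"
    unfolding free_below_def by blast
next
  fix x assume "x \<in> free_below j M"
  then obtain m where m: "m \<in> M" "\<forall>i\<ge>j. x i = m i"
    unfolding free_below_def by blast
  then have "\<forall>i\<ge>j. (- x) i = (- m) i"
    by simp
  moreover have "- m \<in> M"
    using M m by (simp add: add_subgroup_def)
  ultimately show "- x \<in> free_below j M"
    unfolding free_below_def by blast
qed

lemma subset_free_below: "M \<subseteq> free_below j M"
  unfolding free_below_def by blast

lemma free_below_0: "free_below 0 M = M"
  unfolding free_below_def by (simp add: fun_eq_iff[symmetric])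

lemma free_below_eq_lat:
  assumes "add_subgroup M" "M \<subseteq> lat n"
  shows "free_below n M = lat n"
proof
  show "free_below n M \<subseteq> lat n"
    using assms(2) unfolding free_below_def lat_def by auto
  have "\<forall>i\<ge>n. y i = (0 :: nat \<Rightarrow> int) i" if "y \<in> lat n" for y
    using that by (simp add: lat_def)
  then show "lat n \<subseteq> free_below n M"
    using assms(1) unfolding free_below_def add_subgroup_def by blast
qed

lemma free_below_Suc:
  "free_below (Suc j) M = adjoin (free_below j M) (\<lambda>i. if i = j then 1 else 0)"
  (is "_ = adjoin _ ?e")
proof
  show "free_below (Suc j) M \<subseteq> adjoin (free_below j M) ?e"
  proof
    fix y assume "y \<in> free_below (Suc j) M"
    then obtain m where m: "m \<in> M" "\<forall>i\<ge>Suc j. y i = m i"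
      unfolding free_below_def by blast
    have "\<forall>i\<ge>j. (y + of_int (m j - y j) * ?e) i = m i"
    proof (intro allI impI)
      fix i assume "j \<le> i"
      then show "(y + of_int (m j - y j) * ?e) i = m i"
        using m(2) by (cases "i = j") auto
    qed
    then have "y + of_int (m j - y j) * ?e \<in> free_below j M"
      unfolding free_below_def using m(1) by blast
    moreover have "y = (y + of_int (m j - y j) * ?e) + of_int (y j - m j) * ?e"
      by (simp add: fun_eq_iff algebra_simps)
    ultimately show "y \<in> adjoin (free_below j M) ?e"
      unfolding adjoin_def by blast
  qed
  show "adjoin (free_below j M) ?e \<subseteq> free_below (Suc j) M"
  proof
    fix y assume "y \<in> adjoin (free_below j M) ?e"
    then obtain m' t where "m' \<in> free_below j M" "y = m' + of_int t * ?e"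
      unfolding adjoin_def by blast
    moreover from this obtain m where "m \<in> M" "\<forall>i\<ge>j. m' i = m i"
      unfolding free_below_def by blast
    ultimately show "y \<in> free_below (Suc j) M"
      unfolding free_below_def by auto
  qed
qed

lemma character_on_extend_to_lat:
  fixes \<theta> :: "(nat \<Rightarrow> int) \<Rightarrow> 'k::alg_closed_field"
  assumes M: "add_subgroup M" "M \<subseteq> lat n" and \<theta>: "character_on M \<theta>"
  shows "\<exists>\<theta>'. character_on (lat n) \<theta>' \<and> (\<forall>m\<in>M. \<theta>' m = \<theta> m)"
proof -
  have "\<exists>\<theta>'. character_on (free_below j M) \<theta>' \<and> (\<forall>m\<in>M. \<theta>' m = \<theta> m)" for j
  proof (induction j)
    case 0
    then show ?case
      using \<theta> by (auto simp: free_below_0)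
  next
    case (Suc j)
    then obtain \<theta>\<^sub>j where \<theta>\<^sub>j: "character_on (free_below j M) \<theta>\<^sub>j" "\<forall>m\<in>M. \<theta>\<^sub>j m = \<theta> m"
      by blast
    note M\<^sub>j = add_subgroup_free_below[OF M(1), of j]
    define e :: "nat \<Rightarrow> int" where "e = (\<lambda>i. if i = j then 1 else 0)"
    obtain c where c: "c \<noteq> 0" and compat: "\<And>t. of_int t * e \<in> free_below j M \<Longrightarrow> \<theta>\<^sub>j (of_int t * e) = c powi t"
      using ex_compatible_value[OF M\<^sub>j \<theta>\<^sub>j(1)] by blast
    have "free_below (Suc j) M = adjoin (free_below j M) e"
      by (simp add: free_below_Suc e_def)
    moreover have "\<exists>\<theta>'. character_on (adjoin (free_below j M) e) \<theta>' \<and> (\<forall>m\<in>free_below j M. \<theta>' m = \<theta>\<^sub>j m) \<and> \<theta>' e = c"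
      by (rule character_on_adjoin[OF M\<^sub>j \<theta>\<^sub>j(1) c, of e]) (rule compat)
    ultimately obtain \<theta>' where \<theta>': "character_on (free_below (Suc j) M) \<theta>'"
      "\<forall>m\<in>free_below j M. \<theta>' m = \<theta>\<^sub>j m"
      by auto
    have "\<forall>m\<in>M. \<theta>' m = \<theta> m"
      using \<theta>'(2) \<theta>\<^sub>j(2) subset_free_below[of M j] by auto
    with \<theta>'(1) show ?case
      by blast
  qed
  from this[of n] show ?thesis
    unfolding free_below_eq_lat[OF M] .
qed

section \<open>The quotient of the lattice by a sublattice\<close>

lemma (in comm_group) pow_card_rcosets_mem:
  assumes H: "subgroup H G" "finite (rcosets H)" and x: "x \<in> carrier G"
  shows "x [^] card (rcosets H) \<in> H"
proof -
  interpret normal H G using subgroup_imp_normal[OF H(1)] .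
  interpret Q: group "G Mod H" by (rule factorgroup_is_group)
  have "H #> x \<in> carrier (G Mod H)"
    using x by (simp add: carrier_FactGroup)
  then have "(H #> x) [^]\<^bsub>G Mod H\<^esub> card (rcosets H) = H"
    using Q.pow_order_eq_1 by (simp add: Coset.order_def FactGroup_def)
  then have "H #> (x [^] card (rcosets H)) = H"
    using FactGroup_pow[OF x] by simp
  then show ?thesis
    using coset_join1 H(1) x by blast
qed

lemma (in comm_group) ex_prime_order_mod_subgroup:
  assumes H: "subgroup H G" "finite (rcosets H)" and p: "prime p" "p dvd card (rcosets H)"
  shows "\<exists>x\<in>carrier G. x \<notin> H \<and> x [^] p \<in> H"
proof -
  interpret normal H G using subgroup_imp_normal[OF H(1)] .
  interpret Q: group "G Mod H" by (rule factorgroup_is_group)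
  have "Coset.order (G Mod H) = p ^ 1 * (card (rcosets H) div p)"
    using p(2) by (simp add: Coset.order_def FactGroup_def)
  then obtain P where P: "subgroup P (G Mod H)" "card P = p"
    using sylow_thm[OF p(1) Q.is_group] H(2) by (fastforce simp: FactGroup_def)
  have "\<not> P \<subseteq> {H}"
  proof
    assume "P \<subseteq> {H}"
    then have "card P \<le> 1"
      using card_mono[of "{H}" P] by simp
    then show False
      using P(2) prime_gt_1_nat[OF p(1)] by simp
  qed
  then obtain C where C: "C \<in> P" "C \<noteq> H"
    by blast
  have "C \<in> carrier (G Mod H)"
    using C(1) P(1) subgroup.subset by blast
  then obtain x where x: "x \<in> carrier G" "C = H #> x"
    by (auto simp: carrier_FactGroup)
  interpret P: group "(G Mod H)\<lparr>carrier := P\<rparr>"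
    using Q.subgroup_imp_group[OF P(1)] .
  have "C [^]\<^bsub>G Mod H\<^esub> p = H"
    using P.pow_order_eq_1[of C] C(1) P(2) Q.nat_pow_consistent
    by (simp add: Coset.order_def)
  then have "H #> (x [^] p) = H"
    using FactGroup_pow[OF x(1)] x(2) by simp
  then have "x [^] p \<in> H"
    using coset_join1 H(1) x(1) by blast
  moreover have "x \<notin> H"
    using coset_join2[OF x(1) H(1)] C(2) x(2) by blast
  ultimately show ?thesis
    using x(1) by blast
qed

definition lattice_group :: "nat \<Rightarrow> (nat \<Rightarrow> int) monoid" where
  "lattice_group n = \<lparr>carrier = lat n, monoid.mult = (+), one = 0\<rparr>"

lemma lattice_group_simps [simp]:
  "carrier (lattice_group n) = lat n"
  "monoid.mult (lattice_group n) = (+)"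
  "one (lattice_group n) = 0"
  by (simp_all add: lattice_group_def)

lemma comm_group_lattice_group: "comm_group (lattice_group n)"
proof (rule comm_groupI)
  fix x assume "x \<in> carrier (lattice_group n)"
  then show "\<exists>y\<in>carrier (lattice_group n). y \<otimes>\<^bsub>lattice_group n\<^esub> x = \<one>\<^bsub>lattice_group n\<^esub>"
    by (intro bexI[of _ "- x"]) (simp_all add: lat_def)
qed (auto simp: lat_def add.assoc add.commute)

lemma nat_pow_lattice_group: "x [^]\<^bsub>lattice_group n\<^esub> (k::nat) = of_nat k * x"
  by (induction k) (simp_all add: algebra_simps)

lemma subgroup_lattice_group:
  assumes "sublattice n L"
  shows "subgroup L (lattice_group n)"
proof -
  interpret comm_group "lattice_group n"
    by (rule comm_group_lattice_group)
  have "inv\<^bsub>lattice_group n\<^esub> x = - x" if "x \<in> lat n" for x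
    using that by (intro inv_equality) (simp_all add: lat_def)
  then show ?thesis
    using assms unfolding sublattice_iff add_subgroup_def
    by (intro subgroupI) (auto simp: subset_iff)
qed

lemma rcosets_lattice_group:
  assumes "L \<subseteq> lat n"
  shows "rcosets\<^bsub>lattice_group n\<^esub> L = cosets n L"
proof -
  have "L #>\<^bsub>lattice_group n\<^esub> x = (+) x ` L" for x
    by (auto simp: r_coset_def add.commute)
  then show ?thesis
    by (simp add: RCOSETS_def cosets_def UNION_singleton_eq_range)
qed

lemma index_mult_mem_sublattice:
  assumes L: "sublattice n L" "finite (cosets n L)" and x: "x \<in> lat n"
  shows "of_nat (lat_index n L) * x \<in> L"
proof -
  interpret comm_group "lattice_group n"
    by (rule comm_group_lattice_group)
  have "L \<subseteq> lat n"
    using L(1) by (simp add: sublattice_iff)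
  then show ?thesis
    using pow_card_rcosets_mem[OF subgroup_lattice_group[OF L(1)]] L(2) x
    by (simp add: rcosets_lattice_group nat_pow_lattice_group lat_index_def)
qed

lemma ex_prime_order_mod_sublattice:
  assumes L: "sublattice n L" "finite (cosets n L)" and p: "prime p" "p dvd lat_index n L"
  shows "\<exists>x\<in>lat n. x \<notin> L \<and> of_nat p * x \<in> L"
proof -
  interpret comm_group "lattice_group n"
    by (rule comm_group_lattice_group)
  have "L \<subseteq> lat n"
    using L(1) by (simp add: sublattice_iff)
  then show ?thesis
    using ex_prime_order_mod_subgroup[OF subgroup_lattice_group[OF L(1)]] L(2) p
    by (simp add: rcosets_lattice_group nat_pow_lattice_group lat_index_def)
qed

lemma ex_order_mod_sublattice:
  assumes L: "sublattice n L" "finite (cosets n L)" and x: "x \<in> lat n" "x \<notin> L"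
  shows "\<exists>k>1. k dvd lat_index n L \<and> (\<forall>t. of_int t * x \<in> L \<longleftrightarrow> int k dvd t)"
proof -
  obtain k where k: "k \<ge> 0" "\<And>t. of_int t * x \<in> L \<longleftrightarrow> k dvd t"
    using ex_order_mod_add_subgroup L(1) by (metis sublattice_iff)
  have "of_int (int (lat_index n L)) * x \<in> L"
    using index_mult_mem_sublattice[OF L x(1)] by simp
  then have dvd: "k dvd int (lat_index n L)"
    using k(2) by blast
  have "0 \<in> lat n"
    by (simp add: lat_def)
  then have "lat_index n L > 0"
    using L(2) by (auto simp: lat_index_def cosets_def card_gt_0_iff)
  then have "k \<noteq> 0"
    using dvd by auto
  moreover have "k \<noteq> 1"
    using k(2)[of 1] x(2) by auto
  ultimately have "nat k > 1"
    using k(1) by linarith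
  moreover have k_eq: "int (nat k) = k"
    using k(1) by simp
  then have "nat k dvd lat_index n L"
    using dvd by (metis int_dvd_int_iff)
  ultimately show ?thesis
    using k(2) k_eq by (intro exI[of _ "nat k"]) simp
qed

section \<open>Roots of unity\<close>

lemma ex_nontrivial_root_of_unity:
  assumes "k > 1" "of_nat k \<noteq> (0::'k::alg_closed_field)"
  shows "\<exists>c::'k. c ^ k = 1 \<and> c \<noteq> 1"
proof -
  obtain c :: 'k where c: "(\<Sum>j\<le>k - 1. 1 * c ^ j) = 0"
    using alg_closed[of "k - 1" "\<lambda>_. 1"] assms(1) by auto
  have "{..k - 1} = {..<k}"
    using assms(1) by auto
  then have sum: "(\<Sum>j<k. c ^ j) = 0"
    using c by simp
  then have "c ^ k = 1"
    using power_diff_1_eq[of c k] by simp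
  moreover have "c \<noteq> 1"
    using sum assms(2) by auto
  ultimately show ?thesis
    by blast
qed

lemma eq_1_if_power_CHAR_eq_1:
  fixes a :: "'k::idom"
  assumes "prime CHAR('k)" "a ^ CHAR('k) = 1"
  shows "a = 1"
proof -
  have "(a + (- 1)) ^ CHAR('k) = a ^ CHAR('k) + (- 1) ^ CHAR('k)"
    using freshmans_dream assms(1) by blast
  also have "\<dots> = 0"
    using assms minus_power_prime_CHAR[of "CHAR('k)" "1::'k"] by simp
  finally show ?thesis
    by simp
qed

section \<open>Characteristic sublattices\<close>

lemma ex_separating_character:
  assumes L: "sublattice n L" "finite (cosets n L)"
    and index: "\<not> CHAR('k::alg_closed_field) dvd lat_index n L"
    and x: "x \<in> lat n" "x \<notin> L"
  shows "\<exists>\<theta> :: (nat \<Rightarrow> int) \<Rightarrow> 'k. character_on (lat n) \<theta> \<and> (\<forall>y\<in>L. \<theta> y = 1) \<and> \<theta> x \<noteq> 1"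
proof -
  have L': "L \<subseteq> lat n" "add_subgroup L"
    using L(1) by (simp_all add: sublattice_iff)
  obtain k where k: "k > 1" "k dvd lat_index n L" "\<And>t. of_int t * x \<in> L \<longleftrightarrow> int k dvd t"
    using ex_order_mod_sublattice[OF L x] by blast
  have "of_nat k \<noteq> (0::'k)"
    using k(2) index by (auto simp: of_nat_eq_0_iff_char_dvd intro: dvd_trans)
  then obtain c :: 'k where c: "c ^ k = 1" "c \<noteq> 1"
    using ex_nontrivial_root_of_unity k(1) by blast
  have "c \<noteq> 0"
    using c(1) k(1) by (auto simp: power_0_left)
  have compat: "(\<lambda>_. 1) (of_int t * x) = c powi t" if tx: "of_int t * x \<in> L" for t
  proof -
    obtain q where "t = int k * q"
      using k(3) tx unfolding dvd_def by blast
    then show ?thesis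
      using c(1) by (simp add: power_int_mult)
  qed
  obtain \<theta>' where \<theta>': "character_on (adjoin L x) \<theta>'" "\<forall>m\<in>L. \<theta>' m = 1" "\<theta>' x = c"
    using character_on_adjoin[OF L'(2) _ \<open>c \<noteq> 0\<close> compat] by (auto simp: character_on_def)
  have "adjoin L x \<subseteq> lat n"
    by (rule adjoin_subset[OF add_subgroup_lat L'(1) x(1)])
  then obtain \<theta> :: "(nat \<Rightarrow> int) \<Rightarrow> 'k" where
    \<theta>: "character_on (lat n) \<theta>" "\<forall>m\<in>adjoin L x. \<theta> m = \<theta>' m"
    using character_on_extend_to_lat[OF add_subgroup_adjoin[OF L'(2)] _ \<theta>'(1)] by blast
  have "\<forall>y\<in>L. \<theta> y = 1"
    using \<theta>(2) \<theta>'(2) subset_adjoin by fastforce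
  moreover have "\<theta> x = c"
    using \<theta>(2) \<theta>'(3) mem_adjoin_self[OF L'(2)] by simp
  ultimately show ?thesis
    using \<theta>(1) c(2) by blast
qed

lemma characteristicI:
  fixes \<Theta> :: "((nat \<Rightarrow> int) \<Rightarrow> 'k::field) set"
  assumes "finite \<Theta>" "\<forall>\<theta>\<in>\<Theta>. character_on (lat n) \<theta>" "L = {x \<in> lat n. \<forall>\<theta>\<in>\<Theta>. \<theta> x = 1}"
  shows "characteristic TYPE('k) n L"
proof -
  obtain \<theta>s where "set \<theta>s = \<Theta>"
    using finite_list assms(1) by blast
  then show ?thesis
    unfolding characteristic_def lat_hom_iff_character_on
    using assms(2,3) by (intro exI[of _ "length \<theta>s"] exI[of _ "(!) \<theta>s"]) (auto simp: all_set_conv_all_nth in_set_conv_nth)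
qed

lemma ex_character_nontrivial_on_coset:
  assumes L: "sublattice n L" "finite (cosets n L)"
    and index: "\<not> CHAR('k::alg_closed_field) dvd lat_index n L"
    and C: "C \<in> cosets n L - {L}"
  shows "\<exists>\<theta> :: (nat \<Rightarrow> int) \<Rightarrow> 'k. character_on (lat n) \<theta> \<and> (\<forall>y\<in>L. \<theta> y = 1) \<and> (\<forall>y\<in>C. \<theta> y \<noteq> 1)"
proof -
  have L': "L \<subseteq> lat n" "add_subgroup L"
    using L(1) by (simp_all add: sublattice_iff)
  obtain x where x: "x \<in> lat n" "C = (+) x ` L"
    using C by (auto simp: cosets_def)
  then have "x \<notin> L"
    using C image_plus_add_subgroup[OF L'(2)] by auto
  then obtain \<theta> :: "(nat \<Rightarrow> int) \<Rightarrow> 'k" where \<theta>: "character_on (lat n) \<theta>" "\<forall>y\<in>L. \<theta> y = 1" "\<theta> x \<noteq> 1"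
    using ex_separating_character[OF L index x(1)] by blast
  have "\<theta> (x + y) = \<theta> x" if "y \<in> L" for y
    using \<theta> that x(1) L'(1) by (auto simp: character_on_def)
  then show ?thesis
    using \<theta> x(2) by auto
qed

lemma characteristic_if_not_CHAR_dvd_index:
  assumes L: "sublattice n L" "finite (cosets n L)"
    and index: "\<not> CHAR('k::alg_closed_field) dvd lat_index n L"
  shows "characteristic TYPE('k) n L"
proof -
  obtain \<Theta> :: "(nat \<Rightarrow> int) set \<Rightarrow> (nat \<Rightarrow> int) \<Rightarrow> 'k" where \<Theta>:
    "\<And>C. C \<in> cosets n L - {L} \<Longrightarrow>
       character_on (lat n) (\<Theta> C) \<and> (\<forall>y\<in>L. \<Theta> C y = 1) \<and> (\<forall>y\<in>C. \<Theta> C y \<noteq> 1)"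
    using ex_character_nontrivial_on_coset[OF L index] by metis
  have L': "L \<subseteq> lat n" "add_subgroup L"
    using L(1) by (simp_all add: sublattice_iff)
  have mem_L: "y \<in> L" if y: "y \<in> lat n" "\<forall>C\<in>cosets n L - {L}. \<Theta> C y = 1" for y
  proof (rule ccontr)
    assume "y \<notin> L"
    define C where "C = (+) y ` L"
    have "y + 0 \<in> C"
      using L'(2) unfolding C_def add_subgroup_def by blast
    then have "y \<in> C"
      by simp
    moreover have "C \<in> cosets n L"
      using y(1) by (simp add: C_def cosets_def)
    moreover have "C \<noteq> L"
      using \<open>y \<in> C\<close> \<open>y \<notin> L\<close> by blast
    ultimately show False
      using y(2) \<Theta>[of C] by blast
  qed
  show ?thesis
  proof (rule characteristicI[of "\<Theta> ` (cosets n L - {L})"])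
    show "finite (\<Theta> ` (cosets n L - {L}))"
      using L(2) by simp
    show "\<forall>\<theta>\<in>\<Theta> ` (cosets n L - {L}). character_on (lat n) \<theta>"
      using \<Theta> by blast
    show "L = {x \<in> lat n. \<forall>\<theta>\<in>\<Theta> ` (cosets n L - {L}). \<theta> x = 1}"
    proof (intro equalityI subsetI)
      fix y assume "y \<in> L"
      then show "y \<in> {x \<in> lat n. \<forall>\<theta>\<in>\<Theta> ` (cosets n L - {L}). \<theta> x = 1}"
        using L'(1) \<Theta> by auto
    next
      fix y assume "y \<in> {x \<in> lat n. \<forall>\<theta>\<in>\<Theta> ` (cosets n L - {L}). \<theta> x = 1}"
      then show "y \<in> L"
        using mem_L by auto
    qed
  qed
qed

lemma not_CHAR_dvd_index_if_characteristic:
  assumes "prime CHAR('k::field)" and L: "sublattice n L" "finite (cosets n L)"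
    and "characteristic TYPE('k) n L"
  shows "\<not> CHAR('k) dvd lat_index n L"
proof
  assume "CHAR('k) dvd lat_index n L"
  then obtain x where x: "x \<in> lat n" "x \<notin> L" "of_nat CHAR('k) * x \<in> L"
    using ex_prime_order_mod_sublattice[OF L assms(1)] by blast
  obtain m and \<theta>s :: "nat \<Rightarrow> (nat \<Rightarrow> int) \<Rightarrow> 'k" where
    \<theta>s: "\<forall>i<m. character_on (lat n) (\<theta>s i)" "L = {x \<in> lat n. \<forall>i<m. \<theta>s i x = 1}"
    using assms(4) unfolding characteristic_def lat_hom_iff_character_on by blast
  have "\<theta>s i x = 1" if "i < m" for i
  proof (rule eq_1_if_power_CHAR_eq_1)
    have "\<theta>s i x ^ CHAR('k) = \<theta>s i (of_int (int CHAR('k)) * x)"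
      using character_on_of_int_mult[OF add_subgroup_lat \<theta>s(1)[rule_format, OF that] x(1), of "int CHAR('k)"]
      by simp
    also have "\<dots> = 1"
      using x(3) \<theta>s(2) that by simp
    finally show "\<theta>s i x ^ CHAR('k) = 1" .
  qed (use assms(1) in simp)
  then show False
    using x(1,2) \<theta>s(2) by blast
qed

lemma CHAR_eq_if_card_eq_prime_power:
  assumes "prime p" "card (UNIV :: 'f::{field,finite} set) = p ^ r"
  shows "CHAR('f) = p"
proof -
  have "CHAR('f) > 0"
    by (rule finite_imp_CHAR_pos) simp
  then have "prime CHAR('f)"
    by (rule prime_CHAR_semidom)
  moreover have "CHAR('f) dvd card (UNIV :: 'f set)"
    by (rule CHAR_dvd_CARD)
  ultimately show ?thesis
    using assms prime_dvd_power primes_dvd_imp_eq by metis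
qed

lemma coprime_prime_iff_not_dvd:
  fixes p :: nat
  assumes "prime p"
  shows "coprime n p \<longleftrightarrow> \<not> p dvd n"
proof (cases "p dvd n")
  case True
  then show ?thesis
    using prime_gt_1_nat[OF assms] by (simp add: coprime_absorb_right)
next
  case False
  then show ?thesis
    using prime_imp_coprime[OF assms False] by (simp add: ac_simps)
qed

theorem lemma5p9:
  fixes p r n :: nat and L :: "(nat \<Rightarrow> int) set"
  assumes "prime p" and "r > 0" and "card (UNIV :: ('f::{field,finite}) set) = p ^ r"
    and "sublattice n L" and "finite (cosets n L)"
  shows "characteristic TYPE('f alg_closure) n L \<longleftrightarrow> coprime (lat_index n L) p"
proof -
  have CHAR: "CHAR('f alg_closure) = p"
    using CHAR_eq_if_card_eq_prime_power[OF assms(1,3)] by simp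
  show ?thesis
    using characteristic_if_not_CHAR_dvd_index[where 'k = "'f alg_closure", OF assms(4,5)]
      not_CHAR_dvd_index_if_characteristic[where 'k = "'f alg_closure", OF _ assms(4,5)]
    unfolding CHAR coprime_prime_iff_not_dvd[OF assms(1)] using assms(1) by blast
qed

end
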